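(* Let $m\ge 2$ be fixed, $\gamma=\frac{0.29}{m-1}$, and let $R_1,\dots,R_n$ be i.i.d. random interest profiles as described in the context. Let $N_f$ be the number of indices $i$ such that (1) $\angle(R_i,D)\le\arccos\gamma$, and (2) $\angle(R_i,S)\le 3\pi/8$. Then for every fixed $\nu>0$ there is a constant $c>0$ such that for all sufficiently large $n$, $$\Pr\Big[N_f\ge (1-\nu)\frac{n}{4(m-1)}\Big]\ge 1-e^{-cn}.$$
   Context: Interest profiles are unit vectors in the closed positive orthant of the unit sphere of $\mathbb{R}^m$; $\angle(X,Y)$ is the angle between two profiles, $\cos\angle(X,Y)=\langle X,Y\rangle$. $S=(1,0,\dots,0)$ and $D=(0,1,0,\dots,0)$. Each $R_i$ is drawn independently as follows: the angle $\alpha_i=\angle(S,R_i)$ is uniform on $[0,\pi/2]$, and given $\alpha_i$, $R_i$ is uniform among unit vectors of the positive orthant making angle $\alpha_i$ with $S$. *)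

theory Defs
  imports "HOL-Probability.Probability"
begin

text \<open>Interest profiles in R^m are represented as functions nat => real on the
  index set {..<m} (coordinate 0 corresponds to the first coordinate).\<close>

definition inner_m :: "nat \<Rightarrow> (nat \<Rightarrow> real) \<Rightarrow> (nat \<Rightarrow> real) \<Rightarrow> real" where
  "inner_m m x y = (\<Sum>i<m. x i * y i)"

definition angle_m :: "nat \<Rightarrow> (nat \<Rightarrow> real) \<Rightarrow> (nat \<Rightarrow> real) \<Rightarrow> real" where
  "angle_m m x y = arccos (inner_m m x y)"

definition S_vec :: "nat \<Rightarrow> real" where
  "S_vec = (\<lambda>i. if i = 0 then 1 else 0)"

definition D_vec :: "nat \<Rightarrow> real" where
  "D_vec = (\<lambda>i. if i = 1 then 1 else 0)"

text \<open>Uniform (normalised surface) distribution on the positive orthant of the unit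
  sphere of R^{m-1}, the coordinates being indexed by {1..<m}, realised as the
  cone measure: push forward of the uniform distribution on the positive part
  of the unit ball under y |-> y / |y|.\<close>

definition orth_ball :: "nat \<Rightarrow> (nat \<Rightarrow> real) set" where
  "orth_ball m = {y \<in> space (PiM {1..<m} (\<lambda>_. lborel)).
                   (\<forall>i\<in>{1..<m}. 0 \<le> y i) \<and> (\<Sum>i\<in>{1..<m}. (y i)\<^sup>2) \<le> 1}"

definition sphere_orth_dist :: "nat \<Rightarrow> (nat \<Rightarrow> real) measure" where
  "sphere_orth_dist m =
     distr (uniform_measure (PiM {1..<m} (\<lambda>_. lborel)) (orth_ball m))
           (PiM {1..<m} (\<lambda>_. lborel))
           (\<lambda>y. \<lambda>i\<in>{1..<m}. y i / sqrt (\<Sum>j\<in>{1..<m}. (y j)\<^sup>2))"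

text \<open>Distribution of a random profile R: alpha uniform on [0, pi/2], and given alpha,
  R = cos alpha * S + sin alpha * V with V uniform on the positive orthant of
  the unit sphere of the orthogonal complement of S; this is exactly the uniform
  distribution on the unit vectors of the positive orthant at angle alpha from S.\<close>

definition profile_dist :: "nat \<Rightarrow> (nat \<Rightarrow> real) measure" where
  "profile_dist m =
     distr (uniform_measure lborel {0..pi/2} \<Otimes>\<^sub>M sphere_orth_dist m)
           (PiM {..<m} (\<lambda>_. lborel))
           (\<lambda>(a, v). \<lambda>i\<in>{..<m}. if i = 0 then cos a else sin a * v i)"

definition profiles_dist :: "nat \<Rightarrow> nat \<Rightarrow> (nat \<Rightarrow> nat \<Rightarrow> real) measure" where
  "profiles_dist m n = PiM {..<n} (\<lambda>_. profile_dist m)"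

definition N_f :: "nat \<Rightarrow> nat \<Rightarrow> (nat \<Rightarrow> nat \<Rightarrow> real) \<Rightarrow> nat" where
  "N_f m n R = card {i \<in> {..<n}.
       angle_m m (R i) D_vec \<le> arccos (0.29 / (real m - 1)) \<and>
       angle_m m (R i) S_vec \<le> 3 * pi / 8}"

end

(*
  A profile R = cos \<alpha> S + sin \<alpha> V is counted as soon as \<alpha> \<in> [\<pi>/6, 3\<pi>/8], which has
  probability 5/12, and V_1 \<ge> 1/(m-1): then R_1 = sin \<alpha> V_1 \<ge> 1/(2(m-1)) > 0.29/(m-1).
  The uniform measure on the positive part of the ball is invariant under swapping two
  coordinates, so the region where the first coordinate is the largest one carries at least
  a 1/(m-1) share of it; there V_1 \<ge> 1/\<surd>(m-1). Each profile is therefore counted with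
  probability at least 5/(12(m-1)) > 1/(4(m-1)), and Hoeffding's inequality for the number
  of counted profiles among n independent ones gives the exponential bound.
*)

theory Submission
  imports Defs
begin

lemma borel_measurable_arccos [measurable]: "arccos \<in> borel_measurable borel"
proof -
  have "arccos y = The (\<lambda>x. False)" if "y \<notin> {-1..1}" for y
  proof -
    have "\<not> (0 \<le> x \<and> x \<le> pi \<and> cos x = y)" for x
      using that cos_ge_minus_one[of x] cos_le_one[of x] by auto
    then show ?thesis unfolding arccos_def by metis
  qed
  then have "arccos = (\<lambda>y. if y \<in> {-1..1} then arccos y else The (\<lambda>x. False))"
    by (auto simp: fun_eq_iff)
  also have "\<dots> \<in> borel_measurable borel"
    by (rule borel_measurable_continuous_on_if) (auto intro: continuous_on_arccos')
  finally show ?thesis .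
qed

lemma (in sigma_finite_measure) distr_PiM_permute_coordinates:
  assumes I: "finite I" and p: "bij_betw p I I"
  shows "distr (PiM I (\<lambda>_. M)) (PiM I (\<lambda>_. M)) (\<lambda>x. \<lambda>i\<in>I. x (p i)) = PiM I (\<lambda>_. M)"
proof -
  interpret product_sigma_finite "\<lambda>_. M" ..
  have pI: "p i \<in> I" if "i \<in> I" for i
    using p that by (auto simp: bij_betw_def)
  have meas: "(\<lambda>x. \<lambda>i\<in>I. x (p i)) \<in> PiM I (\<lambda>_. M) \<rightarrow>\<^sub>M PiM I (\<lambda>_. M)"
    by (intro measurable_restrict measurable_component_singleton pI)
  show ?thesis
  proof (rule PiM_eqI[OF I])
    fix A assume A: "\<And>i. i \<in> I \<Longrightarrow> A i \<in> sets M"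
    have q: "inv_into I p j \<in> I" if "j \<in> I" for j
      using bij_betw_apply[OF bij_betw_inv_into[OF p] that] .
    have reindex: "(\<forall>i\<in>I. x (p i) \<in> A i) \<longleftrightarrow> (\<forall>j\<in>I. x j \<in> A (inv_into I p j))" for x
      using p q by (metis bij_betw_inv_into_left bij_betw_inv_into_right pI)
    have rectangle: "x \<in> PiE I (\<lambda>j. A (inv_into I p j)) \<longleftrightarrow>
        x \<in> space (PiM I (\<lambda>_. M)) \<and> (\<forall>j\<in>I. x j \<in> A (inv_into I p j))" for x
      using A[THEN sets.sets_into_space] q by (auto simp: space_PiM PiE_iff)
    have "(\<lambda>x. \<lambda>i\<in>I. x (p i)) -` PiE I A \<inter> space (PiM I (\<lambda>_. M))
        = PiE I (\<lambda>j. A (inv_into I p j))"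
      by (intro set_eqI) (auto simp: restrict_PiE_iff Pi_iff reindex rectangle)
    then have "emeasure (distr (PiM I (\<lambda>_. M)) (PiM I (\<lambda>_. M)) (\<lambda>x. \<lambda>i\<in>I. x (p i))) (PiE I A)
        = (\<Prod>i\<in>I. emeasure M (A (inv_into I p i)))"
      using A meas p by (simp add: emeasure_distr sets_PiM_I_finite I emeasure_PiM inv_into_into bij_betw_def)
    also have "\<dots> = (\<Prod>i\<in>I. emeasure M (A i))"
      using prod.reindex_bij_betw[OF bij_betw_inv_into[OF p], of "\<lambda>i. emeasure M (A i)"] by simp
    finally show "emeasure (distr (PiM I (\<lambda>_. M)) (PiM I (\<lambda>_. M)) (\<lambda>x. \<lambda>i\<in>I. x (p i))) (PiE I A)
        = (\<Prod>i\<in>I. emeasure M (A i))" .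
  qed simp_all
qed

lemma indep_vars_PiM_components:
  assumes P: "prob_space P" and I: "I \<noteq> {}"
  shows "prob_space.indep_vars (PiM I (\<lambda>_. P)) (\<lambda>_. P) (\<lambda>i x. x i) I"
proof -
  let ?M = "PiM I (\<lambda>_. P)"
  interpret M: prob_space ?M by (intro prob_space_PiM P)
  have "distr ?M ?M (\<lambda>x. \<lambda>i\<in>I. x i) = distr ?M ?M (\<lambda>x. x)"
    by (rule distr_cong) (auto simp: space_PiM PiE_restrict)
  also have "\<dots> = PiM I (\<lambda>i. distr ?M P (\<lambda>x. x i))"
    unfolding distr_id by (rule PiM_cong) (auto intro!: distr_PiM_component[symmetric] P)
  finally show ?thesis
    using I by (intro M.indep_vars_iff_distr_eq_PiM'[THEN iffD2]) simp_all
qed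

lemma prob_card_hits_ge:
  fixes I :: "'i set"
  assumes P: "prob_space P" and A: "A \<in> sets P" and I: "finite I" "I \<noteq> {}"
    and \<delta>: "\<delta> \<ge> 0" and t: "t \<le> (measure P A - \<delta>) * card I"
  shows "measure (PiM I (\<lambda>_. P)) {x \<in> space (PiM I (\<lambda>_. P)). t \<le> card {i \<in> I. x i \<in> A}}
           \<ge> 1 - exp (- 2 * \<delta>\<^sup>2 * card I)"
proof -
  let ?M = "PiM I (\<lambda>_. P)"
  interpret P: prob_space P by (fact P)
  interpret M: prob_space ?M by (intro prob_space_PiM P)
  define X where "X i x = (indicator A (x i) :: real)" for i :: 'i and x
  have comp: "(\<lambda>x. x i) \<in> ?M \<rightarrow>\<^sub>M P" if "i \<in> I" for i
    using that by (rule measurable_component_singleton)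
  have X_measurable [measurable]: "X i \<in> borel_measurable ?M" if "i \<in> I" for i
    unfolding X_def using comp[OF that] A by measurable
  have expectation: "M.expectation (X i) = measure P A" if "i \<in> I" for i
  proof -
    have "M.expectation (X i) = integral\<^sup>L (distr ?M P (\<lambda>x. x i)) (indicator A)"
      unfolding X_def using comp[OF that] A by (intro integral_distr[symmetric]) simp_all
    also have "\<dots> = measure P A"
      using that A by (simp add: distr_PiM_component[where M="\<lambda>_. P"] P)
    finally show ?thesis .
  qed
  interpret Hoeffding_ineq ?M I X "\<lambda>_. 0" "\<lambda>_. 1" "card I * measure P A"
  proof unfold_locales
    show "M.indep_vars (\<lambda>_. borel) X I"
      unfolding X_def using A
      by (intro M.indep_vars_compose2[where Y="\<lambda>_. indicator A", OF indep_vars_PiM_components[OF P I(2)]])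
         simp
  qed (auto simp: I X_def expectation)
  have hits: "real (card {i \<in> I. x i \<in> A}) = (\<Sum>i\<in>I. X i x)" for x
    using I by (simp add: X_def indicator_def sum.If_cases Int_def)
  let ?low = "{x \<in> space ?M. (\<Sum>i\<in>I. X i x) \<le> card I * measure P A - \<delta> * card I}"
  let ?good = "{x \<in> space ?M. t \<le> card {i \<in> I. x i \<in> A}}"
  have good_sets: "?good \<in> sets ?M"
    unfolding hits by measurable
  have "space ?M - ?good \<subseteq> ?low"
    using t by (auto simp: hits algebra_simps)
  then have "M.prob (space ?M - ?good) \<le> M.prob ?low"
    by (intro M.finite_measure_mono) measurable
  also have "\<dots> \<le> exp (- 2 * (\<delta> * card I)\<^sup>2 / card I)"
    using Hoeffding_ineq_le[of "\<delta> * card I"] \<delta> I by (simp add: card_gt_0_iff)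
  also have "\<dots> = exp (- 2 * \<delta>\<^sup>2 * card I)"
    using I by (simp add: power2_eq_square)
  finally show ?thesis
    using M.prob_compl[OF good_sets] by simp
qed

lemma borel_measurable_component_lborel:
  "k \<in> I \<Longrightarrow> (\<lambda>y. y k) \<in> borel_measurable (PiM I (\<lambda>_. lborel))"
  using measurable_component_singleton[of k I "\<lambda>_. lborel"] by simp

abbreviation lborel_orth :: "nat \<Rightarrow> (nat \<Rightarrow> real) measure" where
  "lborel_orth m \<equiv> PiM {1..<m} (\<lambda>_. lborel)"

interpretation lborel_product: product_sigma_finite "\<lambda>_::nat. lborel :: real measure" ..

lemma orth_ball_sets [measurable]: "orth_ball m \<in> sets (lborel_orth m)"
  unfolding orth_ball_def by measurable

lemma orth_ball_subset_unit_cube: "orth_ball m \<subseteq> PiE {1..<m} (\<lambda>_. {0..1})"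
proof
  fix y assume y: "y \<in> orth_ball m"
  have "y i \<in> {0..1}" if i: "i \<in> {1..<m}" for i
  proof -
    have "(y i)\<^sup>2 \<le> (\<Sum>j\<in>{1..<m}. (y j)\<^sup>2)"
      using i by (intro member_le_sum) auto
    also have "\<dots> \<le> 1" using y by (simp add: orth_ball_def)
    finally show ?thesis
      using y i by (auto simp: orth_ball_def abs_square_le_1)
  qed
  then show "y \<in> PiE {1..<m} (\<lambda>_. {0..1})"
    using y by (auto simp: orth_ball_def space_PiM PiE_def)
qed

lemma emeasure_orth_ball_le_1: "emeasure (lborel_orth m) (orth_ball m) \<le> 1"
proof -
  have "emeasure (lborel_orth m) (orth_ball m) \<le> emeasure (lborel_orth m) (PiE {1..<m} (\<lambda>_. {0..1}))"
    using orth_ball_subset_unit_cube by (intro emeasure_mono) (auto intro: sets_PiM_I_finite)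
  also have "\<dots> = 1" by (subst lborel_product.emeasure_PiM) auto
  finally show ?thesis .
qed

lemma emeasure_orth_ball_pos:
  assumes m: "m \<ge> 2" shows "emeasure (lborel_orth m) (orth_ball m) > 0"
proof -
  define c where "c = 1 / (real m - 1)"
  have c: "c > 0" using m by (simp add: c_def)
  have "PiE {1..<m} (\<lambda>_. {0..c}) \<subseteq> orth_ball m"
  proof
    fix y assume y: "y \<in> PiE {1..<m} (\<lambda>_. {0..c})"
    have "(\<Sum>j\<in>{1..<m}. (y j)\<^sup>2) \<le> (\<Sum>j\<in>{1..<m}. c\<^sup>2)"
      using y by (intro sum_mono power_mono) auto
    also have "\<dots> = c" using m by (simp add: c_def of_nat_diff power2_eq_square)
    also have "\<dots> \<le> 1" using m by (simp add: c_def)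
    finally show "y \<in> orth_ball m" using y by (auto simp: orth_ball_def space_PiM PiE_def Pi_def)
  qed
  then have "emeasure (lborel_orth m) (PiE {1..<m} (\<lambda>_. {0..c})) \<le> emeasure (lborel_orth m) (orth_ball m)"
    by (intro emeasure_mono orth_ball_sets)
  moreover have "emeasure (lborel_orth m) (PiE {1..<m} (\<lambda>_. {0..c})) = ennreal c ^ (m - 1)"
    using c by (subst lborel_product.emeasure_PiM) auto
  moreover have "ennreal c ^ (m - 1) > 0" using c by (simp add: ennreal_power)
  ultimately show ?thesis by order
qed

lemma orth_ball_fmeasurable: "orth_ball m \<in> fmeasurable (lborel_orth m)"
  using emeasure_orth_ball_le_1[of m] by (intro fmeasurableI orth_ball_sets) (simp add: le_less_trans)

definition normalize_orth :: "nat \<Rightarrow> (nat \<Rightarrow> real) \<Rightarrow> nat \<Rightarrow> real" where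
  "normalize_orth m y = (\<lambda>i\<in>{1..<m}. y i / sqrt (\<Sum>j\<in>{1..<m}. (y j)\<^sup>2))"

lemma measurable_normalize_orth: "normalize_orth m \<in> lborel_orth m \<rightarrow>\<^sub>M lborel_orth m"
  unfolding normalize_orth_def by (intro measurable_restrict) measurable

lemma sphere_orth_dist_eq_distr_normalize_orth:
  "sphere_orth_dist m = distr (uniform_measure (lborel_orth m) (orth_ball m)) (lborel_orth m) (normalize_orth m)"
  unfolding sphere_orth_dist_def normalize_orth_def ..

lemma prob_space_sphere_orth_dist:
  assumes "m \<ge> 2" shows "prob_space (sphere_orth_dist m)"
  unfolding sphere_orth_dist_eq_distr_normalize_orth
proof (intro prob_space.prob_space_distr prob_space_uniform_measure)
  show "emeasure (lborel_orth m) (orth_ball m) \<noteq> 0"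
    using emeasure_orth_ball_pos[OF assms] by simp
  show "emeasure (lborel_orth m) (orth_ball m) \<noteq> \<infinity>"
    using orth_ball_fmeasurable[of m] by (simp add: fmeasurable_def less_top)
  show "normalize_orth m \<in> uniform_measure (lborel_orth m) (orth_ball m) \<rightarrow>\<^sub>M lborel_orth m"
    using measurable_normalize_orth by (simp add: measurable_cong_sets[OF sets_uniform_measure refl])
qed

lemma measure_sphere_orth_dist:
  assumes m: "m \<ge> 2" and E: "E \<in> sets (lborel_orth m)"
  shows "measure (sphere_orth_dist m) E
    = measure (lborel_orth m) {y \<in> orth_ball m. normalize_orth m y \<in> E} / measure (lborel_orth m) (orth_ball m)"
proof -
  let ?L = "lborel_orth m"
  have ball_pos: "emeasure ?L (orth_ball m) \<noteq> 0"
    using emeasure_orth_ball_pos[OF m] by simp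
  have "{y \<in> orth_ball m. normalize_orth m y \<in> E} = orth_ball m \<inter> (normalize_orth m -` E \<inter> space ?L)"
    using sets.sets_into_space[OF orth_ball_sets[of m]] by auto
  moreover have "normalize_orth m -` E \<inter> space ?L \<in> sets ?L"
    by (rule measurable_sets[OF measurable_normalize_orth E])
  ultimately show ?thesis
    unfolding sphere_orth_dist_eq_distr_normalize_orth using measurable_normalize_orth E ball_pos
      orth_ball_fmeasurable[of m]
    by (subst measure_distr)
       (auto simp: measurable_cong_sets[OF sets_uniform_measure refl] fmeasurable_def
        intro!: measure_uniform_measure)
qed

definition orth_ball_peak :: "nat \<Rightarrow> nat \<Rightarrow> (nat \<Rightarrow> real) set" where
  "orth_ball_peak m j = {y \<in> orth_ball m. \<forall>k\<in>{1..<m}. y k \<le> y j}"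

lemma orth_ball_peak_sets [measurable]:
  assumes j: "j \<in> {1..<m}"
  shows "orth_ball_peak m j \<in> sets (lborel_orth m)"
proof -
  have "{y \<in> space (lborel_orth m). y k \<le> y j} \<in> sets (lborel_orth m)" if k: "k \<in> {1..<m}" for k
    using borel_measurable_component_lborel[OF k] borel_measurable_component_lborel[OF j]
    by measurable
  then have "orth_ball m \<inter> (\<Inter>k\<in>{1..<m}. {y \<in> space (lborel_orth m). y k \<le> y j}) \<in> sets (lborel_orth m)"
    using j by (intro sets.Int orth_ball_sets sets.finite_INT) auto
  also have "orth_ball m \<inter> (\<Inter>k\<in>{1..<m}. {y \<in> space (lborel_orth m). y k \<le> y j}) = orth_ball_peak m j"
    using j by (auto simp: orth_ball_peak_def orth_ball_def)
  finally show ?thesis .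
qed

lemma orth_ball_peak_subset: "orth_ball_peak m j \<subseteq> orth_ball m"
  by (auto simp: orth_ball_peak_def)

lemma vimage_transpose_orth_ball_peak:
  assumes j: "j \<in> {1..<m}"
  defines "T \<equiv> \<lambda>y. \<lambda>i\<in>{1..<m}. y (Transposition.transpose 1 j i)"
  shows "T -` orth_ball_peak m j \<inter> space (lborel_orth m) = orth_ball_peak m 1"
proof -
  let ?S = "{1..<m}"
  have m: "1 \<in> ?S" using j by auto
  have bij: "bij_betw (Transposition.transpose 1 j) ?S ?S"
    using j m by simp
  have all: "(\<forall>i\<in>?S. P (Transposition.transpose 1 j i)) \<longleftrightarrow> (\<forall>i\<in>?S. P i)" for P
    using bij_betw_imp_surj_on[OF bij] by (metis image_eqI imageE)
  have "T y \<in> orth_ball_peak m j \<longleftrightarrow> y \<in> orth_ball_peak m 1"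
    if y: "y \<in> space (lborel_orth m)" for y
  proof -
    have "(\<Sum>i\<in>?S. (y (Transposition.transpose 1 j i))\<^sup>2) = (\<Sum>i\<in>?S. (y i)\<^sup>2)"
      using sum.reindex_bij_betw[OF bij, of "\<lambda>i. (y i)\<^sup>2"] by simp
    then show ?thesis
      using y j m all[of "\<lambda>i. 0 \<le> y i"] all[of "\<lambda>i. y i \<le> y 1"]
      by (auto simp: T_def orth_ball_peak_def orth_ball_def space_PiM)
  qed
  then show ?thesis
    using orth_ball_peak_subset[of m 1] sets.sets_into_space[OF orth_ball_sets[of m]] by blast
qed

lemma measure_orth_ball_peak:
  assumes j: "j \<in> {1..<m}"
  shows "measure (lborel_orth m) (orth_ball_peak m j) = measure (lborel_orth m) (orth_ball_peak m 1)"
proof -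
  let ?T = "\<lambda>y. \<lambda>i\<in>{1..<m}. y (Transposition.transpose 1 j i)"
  have bij: "bij_betw (Transposition.transpose 1 j) {1..<m} {1..<m}"
    using j by simp
  have T: "?T \<in> lborel_orth m \<rightarrow>\<^sub>M lborel_orth m"
    using bij by (intro measurable_restrict measurable_component_singleton) (auto dest: bij_betw_apply)
  then have "measure (lborel_orth m) (orth_ball_peak m 1)
      = measure (distr (lborel_orth m) (lborel_orth m) ?T) (orth_ball_peak m j)"
    using measure_distr[OF T orth_ball_peak_sets[OF j]] vimage_transpose_orth_ball_peak[OF j] by simp
  also have "distr (lborel_orth m) (lborel_orth m) ?T = lborel_orth m"
    using bij by (intro lborel.distr_PiM_permute_coordinates) simp
  finally show ?thesis by simp
qed

lemma measure_orth_ball_le_peak: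
  assumes m: "m \<ge> 2"
  shows "measure (lborel_orth m) (orth_ball m) \<le> (real m - 1) * measure (lborel_orth m) (orth_ball_peak m 1)"
proof -
  have "orth_ball m \<subseteq> (\<Union>j\<in>{1..<m}. orth_ball_peak m j)"
  proof
    fix y assume y: "y \<in> orth_ball m"
    have "Max (y ` {1..<m}) \<in> y ` {1..<m}"
      using m by (intro Max_in) auto
    then obtain j where j: "j \<in> {1..<m}" and "y j = Max (y ` {1..<m})"
      by (metis imageE)
    then have "\<forall>k\<in>{1..<m}. y k \<le> y j"
      by simp
    then show "y \<in> (\<Union>j\<in>{1..<m}. orth_ball_peak m j)"
      using y j by (auto simp: orth_ball_peak_def)
  qed
  then have "measure (lborel_orth m) (orth_ball m) \<le> measure (lborel_orth m) (\<Union>j\<in>{1..<m}. orth_ball_peak m j)"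
    using orth_ball_peak_subset
    by (intro measure_mono_fmeasurable fmeasurableI2[OF orth_ball_fmeasurable])
       (auto intro: orth_ball_peak_sets simp del: One_nat_def)
  also have "\<dots> \<le> (\<Sum>j\<in>{1..<m}. measure (lborel_orth m) (orth_ball_peak m j))"
    by (intro measure_UNION_le) (auto intro: orth_ball_peak_sets simp del: One_nat_def)
  also have "\<dots> = (\<Sum>j\<in>{1..<m}. measure (lborel_orth m) (orth_ball_peak m 1))"
    by (intro sum.cong refl measure_orth_ball_peak)
  also have "\<dots> = (real m - 1) * measure (lborel_orth m) (orth_ball_peak m 1)"
    using m by (simp add: of_nat_diff)
  finally show ?thesis .
qed

definition first_coord_large :: "nat \<Rightarrow> (nat \<Rightarrow> real) set" where
  "first_coord_large m = {v \<in> space (lborel_orth m). 1 / (real m - 1) \<le> v 1 \<and> v 1 \<le> 1}"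

lemma first_coord_large_sets [measurable]:
  assumes "m \<ge> 2" shows "first_coord_large m \<in> sets (lborel_orth m)"
proof -
  have [measurable]: "(\<lambda>v. v 1) \<in> borel_measurable (lborel_orth m)"
    using assms by (intro borel_measurable_component_lborel) auto
  show ?thesis
    unfolding first_coord_large_def by measurable
qed

lemma normalize_orth_peak_in_first_coord_large:
  assumes m: "m \<ge> 2" and y: "y \<in> orth_ball_peak m 1" and pos: "y 1 > 0"
  shows "normalize_orth m y \<in> first_coord_large m"
proof -
  define s where "s = (\<Sum>j\<in>{1..<m}. (y j)\<^sup>2)"
  have nonneg: "0 \<le> y j" and le: "y j \<le> y 1" if "j \<in> {1..<m}" for j
    using y that by (auto simp: orth_ball_peak_def orth_ball_def)
  have "(y 1)\<^sup>2 \<le> s"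
    unfolding s_def using m by (intro member_le_sum) auto
  then have lower: "y 1 \<le> sqrt s"
    by (simp add: real_le_rsqrt)
  have "s \<le> (\<Sum>j\<in>{1..<m}. (y 1)\<^sup>2)"
    unfolding s_def using nonneg le by (intro sum_mono power_mono) auto
  also have "\<dots> = (real m - 1) * (y 1)\<^sup>2"
    using m by (simp add: of_nat_diff)
  also have "\<dots> \<le> (real m - 1)\<^sup>2 * (y 1)\<^sup>2"
    using m by (intro mult_right_mono) (auto simp: power2_eq_square)
  also have "\<dots> = ((real m - 1) * y 1)\<^sup>2"
    by (simp add: power_mult_distrib)
  finally have upper: "sqrt s \<le> (real m - 1) * y 1"
    using m pos by (intro real_le_lsqrt) auto
  have "sqrt s > 0"
    using pos lower by linarith
  then have "1 / (real m - 1) \<le> y 1 / sqrt s" "y 1 / sqrt s \<le> 1"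
    using m lower upper by (simp_all add: divide_simps mult.commute)
  moreover have "normalize_orth m y \<in> space (lborel_orth m)"
    using y orth_ball_peak_subset sets.sets_into_space[OF orth_ball_sets]
    by (intro measurable_space[OF measurable_normalize_orth]) blast
  ultimately show ?thesis
    using m by (simp add: first_coord_large_def normalize_orth_def s_def)
qed

lemma first_coord_zero_null:
  assumes m: "m \<ge> 2"
  shows "{y \<in> space (lborel_orth m). y 1 = 0} \<in> null_sets (lborel_orth m)"
proof -
  have "{y \<in> space (lborel_orth m). y 1 = 0} = PiE {1..<m} (\<lambda>i. if i = 1 then {0} else UNIV)"
    using m by (auto simp: space_PiM PiE_def Pi_def split: if_splits)
  moreover have "emeasure (lborel_orth m) (PiE {1..<m} (\<lambda>i. if i = 1 then {0} else UNIV)) = 0"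
    using m by (subst lborel_product.emeasure_PiM) (auto intro!: prod_zero bexI[of _ 1])
  ultimately show ?thesis
    by (auto intro!: null_setsI sets_PiM_I_finite)
qed

lemma prob_sphere_first_coord_large:
  assumes m: "m \<ge> 2"
  shows "measure (sphere_orth_dist m) (first_coord_large m) \<ge> 1 / (real m - 1)"
proof -
  let ?L = "lborel_orth m"
  let ?G = "{y \<in> orth_ball m. normalize_orth m y \<in> first_coord_large m}"
  \<comment> \<open>on the peak, \<open>y 1 = 0\<close> forces \<open>y = 0\<close>, which normalises to junk; this null set is discarded\<close>
  let ?H = "{y \<in> space ?L. y 1 = 0}"
  have peak: "orth_ball_peak m 1 \<in> sets ?L"
    using m by (intro orth_ball_peak_sets) auto
  have "?G = orth_ball m \<inter> (normalize_orth m -` first_coord_large m \<inter> space ?L)"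
    using sets.sets_into_space[OF orth_ball_sets[of m]] by auto
  then have G: "?G \<in> sets ?L"
    using sets.Int[OF orth_ball_sets measurable_sets[OF measurable_normalize_orth first_coord_large_sets[OF m]]]
    by simp
  have "orth_ball_peak m 1 - ?H \<subseteq> ?G"
  proof
    fix y assume y: "y \<in> orth_ball_peak m 1 - ?H"
    then have "y 1 > 0"
      using m by (force simp: orth_ball_peak_def orth_ball_def)
    then show "y \<in> ?G"
      using m y orth_ball_peak_subset normalize_orth_peak_in_first_coord_large by blast
  qed
  then have "measure ?L (orth_ball_peak m 1 - ?H) \<le> measure ?L ?G"
    using peak G null_setsD2[OF first_coord_zero_null[OF m]]
    by (intro measure_mono_fmeasurable fmeasurableI2[OF orth_ball_fmeasurable]) auto
  then have "measure ?L (orth_ball m) \<le> (real m - 1) * measure ?L ?G"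
    using measure_orth_ball_le_peak[OF m] m measure_Diff_null_set[OF peak first_coord_zero_null[OF m]]
    by (simp add: order_trans)
  moreover have "measure ?L (orth_ball m) > 0"
    using emeasure_orth_ball_pos[OF m] orth_ball_fmeasurable[of m] by (simp add: emeasure_eq_measure2)
  ultimately show ?thesis
    using m by (simp add: measure_sphere_orth_dist[OF m first_coord_large_sets[OF m]] field_simps)
qed

lemma angle_m_D_vec: "m \<ge> 2 \<Longrightarrow> angle_m m x D_vec = arccos (x 1)"
  by (simp add: angle_m_def inner_m_def D_vec_def if_distrib sum.delta cong: if_cong)

lemma angle_m_S_vec: "m \<ge> 1 \<Longrightarrow> angle_m m x S_vec = arccos (x 0)"
  by (simp add: angle_m_def inner_m_def S_vec_def if_distrib sum.delta cong: if_cong)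

definition good_profiles :: "nat \<Rightarrow> (nat \<Rightarrow> real) set" where
  "good_profiles m = {R \<in> space (PiM {..<m} (\<lambda>_. lborel)).
     angle_m m R D_vec \<le> arccos (0.29 / (real m - 1)) \<and> angle_m m R S_vec \<le> 3 * pi / 8}"

lemma good_profiles_sets:
  assumes m: "m \<ge> 2" shows "good_profiles m \<in> sets (PiM {..<m} (\<lambda>_. lborel))"
proof -
  have [measurable]: "(\<lambda>R. R 0) \<in> borel_measurable (PiM {..<m} (\<lambda>_. lborel))"
      "(\<lambda>R. R 1) \<in> borel_measurable (PiM {..<m} (\<lambda>_. lborel))"
    using m by (auto intro: borel_measurable_component_lborel)
  have "good_profiles m = {R \<in> space (PiM {..<m} (\<lambda>_. lborel)).
      arccos (R 1) \<le> arccos (0.29 / (real m - 1)) \<and> arccos (R 0) \<le> 3 * pi / 8}"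
    using m by (simp add: good_profiles_def angle_m_D_vec angle_m_S_vec)
  also have "\<dots> \<in> sets (PiM {..<m} (\<lambda>_. lborel))"
    by measurable
  finally show ?thesis .
qed

definition profile_map :: "nat \<Rightarrow> real \<times> (nat \<Rightarrow> real) \<Rightarrow> nat \<Rightarrow> real" where
  "profile_map m = (\<lambda>(a, v). \<lambda>i\<in>{..<m}. if i = 0 then cos a else sin a * v i)"

lemma profile_dist_eq_distr_profile_map:
  "profile_dist m = distr (uniform_measure lborel {0..pi/2} \<Otimes>\<^sub>M sphere_orth_dist m)
     (PiM {..<m} (\<lambda>_. lborel)) (profile_map m)"
  unfolding profile_dist_def profile_map_def ..

lemma measurable_profile_map:
  "profile_map m \<in> uniform_measure lborel {0..pi/2} \<Otimes>\<^sub>M sphere_orth_dist m \<rightarrow>\<^sub>M PiM {..<m} (\<lambda>_. lborel)"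
proof -
  have sets: "sets (uniform_measure lborel {0..pi/2} \<Otimes>\<^sub>M sphere_orth_dist m) = sets (lborel \<Otimes>\<^sub>M lborel_orth m)"
    by (intro sets_pair_measure_cong) (simp_all add: sphere_orth_dist_def)
  have "(\<lambda>x. if i = 0 then cos (fst x) else sin (fst x) * snd x i) \<in> borel_measurable (lborel \<Otimes>\<^sub>M lborel_orth m)"
    if "i \<in> {..<m}" for i
  proof (cases "i = 0")
    case False
    with that have [measurable]: "(\<lambda>v. v i) \<in> borel_measurable (lborel_orth m)"
      by (intro borel_measurable_component_lborel) auto
    show ?thesis by measurable
  qed simp
  then show ?thesis
    unfolding measurable_cong_sets[OF sets refl] profile_map_def case_prod_beta'
    by (intro measurable_restrict) (simp add: measurable_lborel1)
qed

lemma prob_space_profile_dist: "m \<ge> 2 \<Longrightarrow> prob_space (profile_dist m)"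
  unfolding profile_dist_eq_distr_profile_map
  by (intro prob_space.prob_space_distr prob_space_pair prob_space_uniform_measure
      prob_space_sphere_orth_dist measurable_profile_map) (auto simp: emeasure_lborel_Icc_eq)

lemma profile_map_in_good_profiles:
  assumes m: "m \<ge> 2" and a: "a \<in> {pi/6..3*pi/8}" and v: "v \<in> first_coord_large m"
  shows "profile_map m (a, v) \<in> good_profiles m"
proof -
  let ?R = "profile_map m (a, v)"
  have m1: "real m - 1 \<ge> 1" using m by simp
  have v1: "1 / (real m - 1) \<le> v 1" "v 1 \<le> 1"
    using v by (auto simp: first_coord_large_def)
  have R: "?R 0 = cos a" "?R 1 = sin a * v 1"
    using m by (auto simp: profile_map_def)
  have "arccos (cos a) = a"
    using a pi_gt_zero by (intro arccos_cos) auto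
  then have angle_S: "arccos (?R 0) \<le> 3 * pi / 8"
    using a R by simp
  have "sin (pi/6) \<le> sin a"
    using a by (intro sin_monotone_2pi_le) auto
  then have sin_a: "1/2 \<le> sin a"
    by (simp add: sin_30)
  have "0.29 / (real m - 1) \<le> 1/2 * (1 / (real m - 1))"
    using m1 by (simp add: field_simps)
  also have "\<dots> \<le> sin a * v 1"
    using sin_a v1 m1 by (intro mult_mono) auto
  finally have lower: "0.29 / (real m - 1) \<le> ?R 1"
    unfolding R .
  have upper: "?R 1 \<le> 1"
    unfolding R using sin_a v1 m1 by (intro mult_le_one) (auto intro: order_trans[rotated])
  have "0 \<le> 0.29 / (real m - 1)"
    using m1 by simp
  then have "arccos (?R 1) \<le> arccos (0.29 / (real m - 1))"
    using lower upper by (intro arccos_le_arccos) linarith+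
  then show ?thesis
    using m angle_S by (auto simp: good_profiles_def angle_m_D_vec angle_m_S_vec profile_map_def space_PiM)
qed

lemma prob_good_profiles:
  assumes m: "m \<ge> 2"
  shows "measure (profile_dist m) (good_profiles m) \<ge> 5 / (12 * (real m - 1))"
proof -
  let ?U = "uniform_measure lborel {0..pi/2}"
  let ?V = "sphere_orth_dist m"
  let ?A = "{pi/6..3*pi/8}"
  interpret V: prob_space ?V
    using m by (rule prob_space_sphere_orth_dist)
  interpret UV: prob_space "?U \<Otimes>\<^sub>M ?V"
    by (intro prob_space_pair prob_space_uniform_measure V.prob_space_axioms)
       (auto simp: emeasure_lborel_Icc_eq)
  have large: "first_coord_large m \<in> sets ?V"
    using first_coord_large_sets[OF m] by (simp add: sphere_orth_dist_def)
  have "measure ?U ?A = measure lborel ?A / measure lborel {0..pi/2}"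
    by (subst measure_uniform_measure) (auto simp: emeasure_lborel_Icc_eq Int_absorb1)
  also have "\<dots> = 5/12"
    by (simp add: measure_lborel_Icc field_simps)
  finally have U: "measure ?U ?A = 5/12" .
  have "5 / (12 * (real m - 1)) = measure ?U ?A * (1 / (real m - 1))"
    by (simp add: U)
  also have "\<dots> \<le> measure ?U ?A * measure ?V (first_coord_large m)"
    using prob_sphere_first_coord_large[OF m] by (intro mult_left_mono) auto
  also have "\<dots> = measure (?U \<Otimes>\<^sub>M ?V) (?A \<times> first_coord_large m)"
    using large by (simp add: measure_def V.emeasure_pair_measure_Times enn2real_mult)
  also have "\<dots> \<le> measure (?U \<Otimes>\<^sub>M ?V) (profile_map m -` good_profiles m \<inter> space (?U \<Otimes>\<^sub>M ?V))"
    using profile_map_in_good_profiles[OF m] sets.sets_into_space[OF large]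
      measurable_sets[OF measurable_profile_map good_profiles_sets[OF m]]
    by (intro UV.finite_measure_mono) (auto simp: space_pair_measure)
  also have "\<dots> = measure (profile_dist m) (good_profiles m)"
    unfolding profile_dist_eq_distr_profile_map
    by (rule measure_distr[symmetric, OF measurable_profile_map good_profiles_sets[OF m]])
  finally show ?thesis .
qed

lemma N_f_eq_card_good_profiles:
  assumes "R \<in> space (profiles_dist m n)"
  shows "N_f m n R = card {i \<in> {..<n}. R i \<in> good_profiles m}"
proof -
  have "R i \<in> space (PiM {..<m} (\<lambda>_. lborel))" if "i < n" for i
    using assms that by (auto simp: profiles_dist_def profile_dist_def space_PiM)
  then show ?thesis
    unfolding N_f_def good_profiles_def by (intro arg_cong[where f=card] Collect_cong) auto
qed

lemma prob_N_f_ge: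
  assumes m: "m \<ge> 2" and \<nu>: "\<nu> \<ge> 0" and n: "n > 0"
  defines "q \<equiv> 1 / (4 * (real m - 1))"
  shows "measure (profiles_dist m n)
           {R \<in> space (profiles_dist m n). (1 - \<nu>) * real n / (4 * (real m - 1)) \<le> real (N_f m n R)}
         \<ge> 1 - exp (- (2 * (\<nu> * q)\<^sup>2) * real n)"
proof -
  have "q \<le> 5 / (12 * (real m - 1))"
    using m by (simp add: q_def field_simps)
  then have good: "q \<le> measure (profile_dist m) (good_profiles m)"
    using prob_good_profiles[OF m] by linarith
  have "(1 - \<nu>) * real n / (4 * (real m - 1)) = (q - \<nu> * q) * n"
    by (simp add: q_def diff_divide_distrib add_divide_distrib algebra_simps)
  also have "\<dots> \<le> (measure (profile_dist m) (good_profiles m) - \<nu> * q) * n"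
    using good by (intro mult_right_mono) auto
  finally have "1 - exp (- 2 * (\<nu> * q)\<^sup>2 * card {..<n})
      \<le> measure (profiles_dist m n) {R \<in> space (profiles_dist m n).
           (1 - \<nu>) * real n / (4 * (real m - 1)) \<le> card {i \<in> {..<n}. R i \<in> good_profiles m}}"
    unfolding profiles_dist_def using m \<nu> n good_profiles_sets[OF m]
    by (intro prob_card_hits_ge prob_space_profile_dist) (auto simp: q_def profile_dist_def)
  also have "\<dots> = measure (profiles_dist m n) {R \<in> space (profiles_dist m n).
           (1 - \<nu>) * real n / (4 * (real m - 1)) \<le> N_f m n R}"
    by (intro arg_cong[where f="measure _"] Collect_cong) (auto simp: N_f_eq_card_good_profiles)
  finally show ?thesis by simp
qed

theorem lemma1:
  fixes m :: nat and \<nu> :: real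
  assumes "m \<ge> 2" and "\<nu> > 0"
  shows "\<exists>c>0. \<forall>\<^sub>F n in sequentially.
           measure (profiles_dist m n)
             {R \<in> space (profiles_dist m n).
                real (N_f m n R) \<ge> (1 - \<nu>) * real n / (4 * (real m - 1))}
           \<ge> 1 - exp (- c * real n)"
proof (intro exI conjI)
  show "2 * (\<nu> * (1 / (4 * (real m - 1))))\<^sup>2 > 0"
    using assms by simp
  show "\<forall>\<^sub>F n in sequentially. measure (profiles_dist m n)
          {R \<in> space (profiles_dist m n). real (N_f m n R) \<ge> (1 - \<nu>) * real n / (4 * (real m - 1))}
        \<ge> 1 - exp (- (2 * (\<nu> * (1 / (4 * (real m - 1))))\<^sup>2) * real n)"
    using eventually_gt_at_top[of 0]
  proof eventually_elim
    case (elim n)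
    show ?case
      using assms elim by (intro prob_N_f_ge) auto
  qed
qed

end
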